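(* Let $T_1^f$ and $T_2^g$ be merge trees and let $\varepsilon \ge 0$. Then $d_I(T_1^f, T_2^g) \le \varepsilon$ if and only if there exists an $\varepsilon$-good map $\alpha: |T_1| \to |T_2|$.
   Context: A merge tree $T^h$ is a finite rooted tree $T$ together with a continuous function $h: |T| \to \mathbb{R}$ on its underlying space $|T|$ (each edge viewed as a segment, so interior points of edges are points of $|T|$) such that $h$ is decreasing along every root-to-leaf path; the tree is modified by attaching to the root a ray going upward along which $h$ increases to $+\infty$ (all merge trees are taken in this modified form). For points $u,v$, write $u \succeq v$ if $u$ is an ancestor of $v$ (possibly $u=v$). For $\varepsilon \ge 0$, $u^{\varepsilon}$ denotes the unique ancestor of $u$ with $h(u^\varepsilon) - h(u) = \varepsilon$. Given merge trees $T_1^f$ and $T_2^g$, a pair of continuous maps $\alpha: |T_1| \to |T_2|$, $\beta: |T_2| \to |T_1|$ is $\varepsilon$-compatible if for all $u \in |T_1|$: $g(\alpha(u)) = f(u)+\varepsilon$ and $\beta(\alpha(u)) = u^{2\varepsilon}$; and for all $w \in |T_2|$: $f(\beta(w)) = g(w) + \varepsilon$ and $\alpha(\beta(w)) = w^{2\varepsilon}$. The interleaving distance is $d_I(T_1^f,T_2^g) = \inf\{\varepsilon : \text{there exists a pair of } \varepsilon\text{-compatible maps}\}$. A continuous map $\alpha: |T_1| \to |T_2|$ is $\varepsilon$-good if: (P1) $g(\alpha(u)) = f(u) + \varepsilon$ for all $u \in |T_1|$; (P2) whenever $\alpha(u_1) \succeq \alpha(u_2)$, we have $u_1^{2\varepsilon}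 \succeq u_2^{2\varepsilon}$; (P3) for every $w \in |T_2| \setminus \mathrm{Im}(\alpha)$, $|g(w^F) - g(w)| \le 2\varepsilon$, where $w^F$ is the lowest ancestor of $w$ lying in $\mathrm{Im}(\alpha)$. *)

theory Defs
  imports Main "HOL-Analysis.Analysis"
begin

text \<open>The underlying space |T| (with the extra upward ray at
  the root) is realised as the set of pairs (v, r): the point on the edge from v up to
  par v (or on the ray, if v is the root) at height r.  The height function h is snd.\<close>

record 'v mtree =
  verts :: "'v set"
  par :: "'v \<Rightarrow> 'v"
  root :: "'v"
  hgt :: "'v \<Rightarrow> real"

definition merge_tree :: "'v mtree \<Rightarrow> bool" where
  "merge_tree T \<longleftrightarrow> finite (verts T) \<and> root T \<in> verts T \<and> par T (root T) = root T \<and>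
     (\<forall>v \<in> verts T - {root T}. par T v \<in> verts T \<and> hgt T v < hgt T (par T v))"

definition pts :: "'v mtree \<Rightarrow> ('v \<times> real) set" where
  "pts T = {(v, r). v \<in> verts T \<and> hgt T v \<le> r \<and> (v \<noteq> root T \<longrightarrow> r < hgt T (par T v))}"

definition vanc :: "'v mtree \<Rightarrow> 'v \<Rightarrow> 'v \<Rightarrow> bool" where
  "vanc T w v \<longleftrightarrow> (\<exists>n. (par T ^^ n) v = w)"

definition anc :: "'v mtree \<Rightarrow> 'v \<times> real \<Rightarrow> 'v \<times> real \<Rightarrow> bool" where
  "anc T x y \<longleftrightarrow> x \<in> pts T \<and> y \<in> pts T \<and> vanc T (fst x) (fst y) \<and> snd y \<le> snd x"

definition shift :: "'v mtree \<Rightarrow> 'v \<times> real \<Rightarrow> real \<Rightarrow> 'v \<times> real" where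
  "shift T u e = (THE w. anc T w u \<and> snd w = snd u + e)"

text \<open>Path (tree) metric on |T|, edges having length equal to their height difference;
  it induces the standard topology of the geometric realisation.\<close>
definition lca_height :: "'v mtree \<Rightarrow> 'v \<times> real \<Rightarrow> 'v \<times> real \<Rightarrow> real" where
  "lca_height T x y = Inf {snd z | z. anc T z x \<and> anc T z y}"

definition tdist :: "'v mtree \<Rightarrow> 'v \<times> real \<Rightarrow> 'v \<times> real \<Rightarrow> real" where
  "tdist T x y = (lca_height T x y - snd x) + (lca_height T x y - snd y)"

definition cont_map :: "'a mtree \<Rightarrow> 'b mtree \<Rightarrow> ('a \<times> real \<Rightarrow> 'b \<times> real) \<Rightarrow> bool" where
  "cont_map T1 T2 f \<longleftrightarrow> (\<forall>x \<in> pts T1. f x \<in> pts T2) \<and>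
     (\<forall>x \<in> pts T1. \<forall>e>0. \<exists>d>0. \<forall>y \<in> pts T1. tdist T1 y x < d \<longrightarrow> tdist T2 (f y) (f x) < e)"

definition compatible ::
  "'a mtree \<Rightarrow> 'b mtree \<Rightarrow> real \<Rightarrow> ('a \<times> real \<Rightarrow> 'b \<times> real) \<Rightarrow> ('b \<times> real \<Rightarrow> 'a \<times> real) \<Rightarrow> bool" where
  "compatible T1 T2 e \<alpha> \<beta> \<longleftrightarrow> cont_map T1 T2 \<alpha> \<and> cont_map T2 T1 \<beta> \<and>
     (\<forall>u \<in> pts T1. snd (\<alpha> u) = snd u + e \<and> \<beta> (\<alpha> u) = shift T1 u (2 * e)) \<and>
     (\<forall>w \<in> pts T2. snd (\<beta> w) = snd w + e \<and> \<alpha> (\<beta> w) = shift T2 w (2 * e))"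

definition interleaving_dist :: "'a mtree \<Rightarrow> 'b mtree \<Rightarrow> real" where
  "interleaving_dist T1 T2 = Inf {e. 0 \<le> e \<and> (\<exists>\<alpha> \<beta>. compatible T1 T2 e \<alpha> \<beta>)}"

definition lowest_anc_in :: "'v mtree \<Rightarrow> ('v \<times> real) set \<Rightarrow> 'v \<times> real \<Rightarrow> 'v \<times> real \<Rightarrow> bool" where
  "lowest_anc_in T S w z \<longleftrightarrow> z \<in> S \<and> anc T z w \<and> (\<forall>z' \<in> S. anc T z' w \<longrightarrow> anc T z' z)"

definition good_map :: "'a mtree \<Rightarrow> 'b mtree \<Rightarrow> real \<Rightarrow> ('a \<times> real \<Rightarrow> 'b \<times> real) \<Rightarrow> bool" where
  "good_map T1 T2 e \<alpha> \<longleftrightarrow> cont_map T1 T2 \<alpha> \<and>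
     (\<forall>u \<in> pts T1. snd (\<alpha> u) = snd u + e) \<and>
     (\<forall>u1 \<in> pts T1. \<forall>u2 \<in> pts T1. anc T2 (\<alpha> u1) (\<alpha> u2) \<longrightarrow>
        anc T1 (shift T1 u1 (2 * e)) (shift T1 u2 (2 * e))) \<and>
     (\<forall>w \<in> pts T2 - \<alpha> ` pts T1. \<exists>wF. lowest_anc_in T2 (\<alpha> ` pts T1) w wF \<and>
        \<bar>snd wF - snd w\<bar> \<le> 2 * e)"

end

theory Submission
  imports Defs
begin

text \<open>For maps that raise heights by a constant, continuity is equivalent to preserving the
  ancestor order: near a point every point is comparable with it, so a continuous map is
  locally, hence globally, monotone along each edge. This turns everything into order
  theory. If (\<alpha>, \<beta>) is \<epsilon>-compatible, then \<alpha> is \<epsilon>-good: (P2) is the monotonicity of \<beta>,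
  and w^F lies below \<alpha> (\<beta> w) = w^(2\<epsilon>). Conversely, an \<epsilon>-good \<alpha> is completed by sending w
  to the point at height g w + \<epsilon> above a preimage of w^F; (P2) makes the choice of the
  preimage irrelevant. Finally the infimum defining d_I is attained: given compatible
  pairs for \<epsilon>_n decreasing to \<epsilon>, finitely many vertices have finitely many possible edges
  for their images, so along a subsequence these edges agree and the maps converge to an
  \<epsilon>-compatible pair.\<close>

subsection \<open>Ancestry in a merge tree\<close>

lemma merge_tree_finite: "merge_tree T \<Longrightarrow> finite (verts T)"
  and merge_tree_root_in: "merge_tree T \<Longrightarrow> root T \<in> verts T"
  and merge_tree_par_root: "merge_tree T \<Longrightarrow> par T (root T) = root T"
  and merge_tree_par_in: "merge_tree T \<Longrightarrow> v \<in> verts T \<Longrightarrow> par T v \<in> verts T"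
  and merge_tree_hgt_less:
    "merge_tree T \<Longrightarrow> v \<in> verts T \<Longrightarrow> v \<noteq> root T \<Longrightarrow> hgt T v < hgt T (par T v)"
  unfolding merge_tree_def by (cases "v = root T"; auto)+

lemma merge_tree_hgt_le: "merge_tree T \<Longrightarrow> v \<in> verts T \<Longrightarrow> hgt T v \<le> hgt T (par T v)"
  by (cases "v = root T") (auto simp: merge_tree_par_root dest: merge_tree_hgt_less)

lemma funpow_par_in_verts: "merge_tree T \<Longrightarrow> v \<in> verts T \<Longrightarrow> (par T ^^ n) v \<in> verts T"
  by (induction n) (auto simp: merge_tree_par_in)

lemma hgt_le_funpow_par: "merge_tree T \<Longrightarrow> v \<in> verts T \<Longrightarrow> hgt T v \<le> hgt T ((par T ^^ n) v)"
  by (induction n) (auto intro: order_trans merge_tree_hgt_le funpow_par_in_verts)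

lemma funpow_par_root: "merge_tree T \<Longrightarrow> (par T ^^ n) (root T) = root T"
  by (induction n) (auto simp: merge_tree_par_root)

lemma vanc_refl: "vanc T v v"
  unfolding vanc_def by (metis funpow_0)

lemma vanc_trans: "vanc T a b \<Longrightarrow> vanc T b c \<Longrightarrow> vanc T a c"
  unfolding vanc_def by (metis comp_apply funpow_add)

lemma vanc_linear: "vanc T a v \<Longrightarrow> vanc T b v \<Longrightarrow> vanc T a b \<or> vanc T b a"
proof -
  have "vanc T ((par T ^^ m) v) ((par T ^^ n) v)" if "n \<le> m" for n m
    using that unfolding vanc_def by (metis comp_apply funpow_add le_add_diff_inverse2)
  then show "vanc T a v \<Longrightarrow> vanc T b v \<Longrightarrow> vanc T a b \<or> vanc T b a"
    unfolding vanc_def by (metis nat_le_linear)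
qed

lemma vanc_neq:
  assumes "merge_tree T" "v \<in> verts T" "vanc T w v" "w \<noteq> v"
  shows "v \<noteq> root T" "hgt T (par T v) \<le> hgt T w"
proof -
  obtain n where n: "(par T ^^ n) v = w" using assms(3) unfolding vanc_def by blast
  with assms(4) obtain k where k: "n = Suc k" by (cases n) auto
  show "v \<noteq> root T" using n assms(4) funpow_par_root[OF assms(1)] by metis
  have "(par T ^^ k) (par T v) = w" using n k by (simp add: funpow_Suc_right del: funpow.simps)
  then show "hgt T (par T v) \<le> hgt T w"
    using hgt_le_funpow_par[OF assms(1) merge_tree_par_in[OF assms(1,2)]] by blast
qed

text \<open>Heights strictly increase along the path to the root, so in a finite tree it must
  reach the root.\<close>
lemma vanc_root:
  assumes "merge_tree T" "v \<in> verts T"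
  shows "vanc T (root T) v"
proof (rule ccontr)
  assume "\<not> vanc T (root T) v"
  then have not_root: "(par T ^^ n) v \<noteq> root T" for n unfolding vanc_def by blast
  have "strict_mono (\<lambda>n. hgt T ((par T ^^ n) v))"
    by (rule strict_mono_Suc_iff[THEN iffD2])
      (simp add: merge_tree_hgt_less[OF assms(1) funpow_par_in_verts[OF assms] not_root])
  then have "inj (hgt T \<circ> (\<lambda>n. (par T ^^ n) v))"
    by (simp add: comp_def strict_mono_imp_inj_on)
  then have "inj (\<lambda>n. (par T ^^ n) v)" by (rule inj_on_imageI2)
  moreover have "range (\<lambda>n. (par T ^^ n) v) \<subseteq> verts T"
    using funpow_par_in_verts[OF assms] by blast
  ultimately have "finite (UNIV :: nat set)"
    using finite_subset[OF _ merge_tree_finite[OF assms(1)]] finite_imageD by blast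
  then show False by simp
qed

lemma pts_iff:
  "(v, r) \<in> pts T \<longleftrightarrow> v \<in> verts T \<and> hgt T v \<le> r \<and> (v \<noteq> root T \<longrightarrow> r < hgt T (par T v))"
  unfolding pts_def by simp

lemma ptsD:
  assumes "x \<in> pts T"
  shows "fst x \<in> verts T" "hgt T (fst x) \<le> snd x" "fst x \<noteq> root T \<Longrightarrow> snd x < hgt T (par T (fst x))"
  using assms by (cases x; simp add: pts_iff)+

lemma vertex_in_pts: "merge_tree T \<Longrightarrow> v \<in> verts T \<Longrightarrow> (v, hgt T v) \<in> pts T"
  by (simp add: pts_iff merge_tree_hgt_less)

lemma anc_refl: "x \<in> pts T \<Longrightarrow> anc T x x"
  unfolding anc_def by (simp add: vanc_refl)

lemma anc_trans: "anc T a b \<Longrightarrow> anc T b c \<Longrightarrow> anc T a c"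
  unfolding anc_def using vanc_trans by fastforce

lemma anc_in_pts: "anc T a b \<Longrightarrow> a \<in> pts T" "anc T a b \<Longrightarrow> b \<in> pts T"
  and anc_snd_le: "anc T a b \<Longrightarrow> snd b \<le> snd a"
  unfolding anc_def by auto

lemma anc_fst_neq:
  assumes "merge_tree T" "anc T z x" "fst z \<noteq> fst x"
  shows "fst x \<noteq> root T" "hgt T (par T (fst x)) \<le> hgt T (fst z)"
  using vanc_neq[OF assms(1) ptsD(1)[OF anc_in_pts(2)[OF assms(2)]]] assms(2,3)
  unfolding anc_def by auto

lemma anc_same_edge_below_par:
  assumes "merge_tree T" "anc T z x" "fst x = root T \<or> snd z < hgt T (par T (fst x))"
  shows "fst z = fst x"
proof (rule ccontr)
  assume "fst z \<noteq> fst x"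
  with anc_fst_neq[OF assms(1,2)] ptsD(2)[OF anc_in_pts(1)[OF assms(2)]] assms(3)
  show False by fastforce
qed

lemma anc_same_edge_above_hgt:
  assumes "merge_tree T" "anc T z x" "hgt T (fst z) \<le> snd x"
  shows "fst z = fst x"
proof (rule ccontr)
  assume "fst z \<noteq> fst x"
  with anc_fst_neq[OF assms(1,2)] ptsD(3)[OF anc_in_pts(2)[OF assms(2)]] assms(3)
  show False by fastforce
qed

lemma anc_snd_eq_imp_eq:
  assumes "merge_tree T" "anc T x y" "snd x = snd y"
  shows "x = y"
proof -
  have "fst y = root T \<or> snd x < hgt T (par T (fst y))"
    using ptsD(3)[OF anc_in_pts(2)[OF assms(2)]] assms(3) by auto
  with anc_same_edge_below_par[OF assms(1,2)] assms(3) show ?thesis by (simp add: prod_eq_iff)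
qed

lemma anc_antisym: "merge_tree T \<Longrightarrow> anc T x y \<Longrightarrow> anc T y x \<Longrightarrow> x = y"
  by (simp add: anc_snd_eq_imp_eq anc_snd_le order_antisym)

lemma anc_by_height:
  assumes "merge_tree T" "anc T a y" "anc T b y" "snd a \<le> snd b"
  shows "anc T b a"
proof -
  have a: "a \<in> pts T" and b: "b \<in> pts T" using assms(2,3) by (auto dest: anc_in_pts)
  from assms(2,3) have "vanc T (fst a) (fst y)" "vanc T (fst b) (fst y)"
    unfolding anc_def by auto
  then have "vanc T (fst a) (fst b) \<or> vanc T (fst b) (fst a)" by (rule vanc_linear)
  moreover have False if "vanc T (fst a) (fst b)" "fst a \<noteq> fst b"
    using vanc_neq[OF assms(1) ptsD(1)[OF b] that] ptsD[OF a] ptsD[OF b] assms(4) by auto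
  ultimately have "vanc T (fst b) (fst a)" by (metis vanc_refl)
  then show ?thesis using a b assms(4) unfolding anc_def by simp
qed

lemma anc_eq_by_height: "merge_tree T \<Longrightarrow> anc T a y \<Longrightarrow> anc T b y \<Longrightarrow> snd a = snd b \<Longrightarrow> a = b"
  by (metis anc_by_height anc_snd_eq_imp_eq order_refl)

lemma anc_exists:
  assumes "merge_tree T" "x \<in> pts T" "snd x \<le> t"
  shows "\<exists>z. anc T z x \<and> snd z = t"
proof -
  define P where "P k \<longleftrightarrow> (par T ^^ k) (fst x) = root T \<or> t < hgt T (par T ((par T ^^ k) (fst x)))" for k
  define k where "k = (LEAST k. P k)"
  define w where "w = (par T ^^ k) (fst x)"
  have v: "fst x \<in> verts T" using ptsD(1)[OF assms(2)] .
  obtain n where "(par T ^^ n) (fst x) = root T" using vanc_root[OF assms(1) v] unfolding vanc_def by blast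
  then have Pk: "P k" unfolding k_def by (intro LeastI[of P n]) (simp add: P_def)
  have "hgt T w \<le> t"
  proof (cases k)
    case 0
    then show ?thesis using ptsD(2)[OF assms(2)] assms(3) unfolding w_def by simp
  next
    case (Suc j)
    then have "\<not> P j" unfolding k_def using not_less_Least by (metis lessI)
    then show ?thesis unfolding P_def w_def Suc by simp
  qed
  then have "(w, t) \<in> pts T"
    using Pk funpow_par_in_verts[OF assms(1) v] unfolding P_def w_def by (auto simp: pts_iff)
  moreover have "vanc T w (fst x)" unfolding vanc_def w_def by blast
  ultimately have "anc T (w, t) x" using assms(2,3) unfolding anc_def by simp
  then show ?thesis by auto
qed

lemma shift_eqI: "merge_tree T \<Longrightarrow> anc T z x \<Longrightarrow> snd z = snd x + e \<Longrightarrow> shift T x e = z"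
  unfolding shift_def by (rule the_equality) (simp, metis anc_eq_by_height)

lemma
  assumes "merge_tree T" "x \<in> pts T" "0 \<le> e"
  shows shift_anc: "anc T (shift T x e) x"
    and snd_shift: "snd (shift T x e) = snd x + e"
    and shift_in_pts: "shift T x e \<in> pts T"
proof -
  obtain z where z: "anc T z x" "snd z = snd x + e"
    using anc_exists[OF assms(1,2), of "snd x + e"] assms(3) by auto
  then show "anc T (shift T x e) x" "snd (shift T x e) = snd x + e" "shift T x e \<in> pts T"
    using shift_eqI[OF assms(1) z] anc_in_pts(1)[OF z(1)] by auto
qed

lemma shift_0: "merge_tree T \<Longrightarrow> x \<in> pts T \<Longrightarrow> shift T x 0 = x"
  by (simp add: shift_eqI anc_refl)

lemma shift_shift:
  assumes "merge_tree T" "x \<in> pts T" "0 \<le> a" "0 \<le> b"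
  shows "shift T (shift T x a) b = shift T x (a + b)"
proof (rule shift_eqI[symmetric, OF assms(1)])
  show "anc T (shift T (shift T x a) b) x"
    using anc_trans[OF shift_anc shift_anc] shift_in_pts assms by metis
qed (simp add: assms snd_shift shift_in_pts)

lemma shift_anc_shift:
  assumes "merge_tree T" "x \<in> pts T" "0 \<le> a" "a \<le> b"
  shows "anc T (shift T x b) (shift T x a)"
  using assms by (intro anc_by_height[OF assms(1) shift_anc shift_anc]) (auto simp: snd_shift)

lemma anc_shift_mono:
  assumes "merge_tree T" "anc T a b" "0 \<le> d"
  shows "anc T (shift T a d) (shift T b d)"
proof -
  have a: "a \<in> pts T" and b: "b \<in> pts T" using assms(2) by (auto dest: anc_in_pts)
  have "anc T (shift T a d) b" using anc_trans[OF shift_anc[OF assms(1) a assms(3)] assms(2)] .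
  with assms show ?thesis
    by (intro anc_by_height[OF assms(1) shift_anc[OF assms(1) b assms(3)]])
      (auto simp: snd_shift a b anc_snd_le)
qed

text \<open>Common ancestors close enough above p and q lie on the edges of both.\<close>
lemma pts_eqI_close_common_anc:
  assumes "merge_tree T" "p \<in> pts T" "q \<in> pts T" "snd p = snd q"
    and close: "\<And>\<delta>. \<delta> > 0 \<Longrightarrow> \<exists>z. anc T z p \<and> anc T z q \<and> snd z < snd p + \<delta>"
  shows "p = q"
proof -
  define gap where "gap x = (if fst x = root T then 1 else hgt T (par T (fst x)) - snd x)" for x
  have "gap p > 0" "gap q > 0" using ptsD(3) assms(2,3) unfolding gap_def by fastforce+
  then obtain z where z: "anc T z p" "anc T z q" "snd z < snd p + min (gap p) (gap q)"
    using close[of "min (gap p) (gap q)"] by auto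
  then have "fst z = fst p" "fst z = fst q"
    using anc_same_edge_below_par[OF assms(1)] assms(4) unfolding gap_def by (fastforce split: if_splits)+
  then show ?thesis using assms(4) by (simp add: prod_eq_iff)
qed

lemma anc_if_shifts_anc:
  assumes "merge_tree T" "a \<in> pts T" "b \<in> pts T" "snd b \<le> snd a"
    and close: "\<And>\<delta>. \<delta> > 0 \<Longrightarrow> \<exists>d. 0 \<le> d \<and> d < \<delta> \<and> anc T (shift T a d) (shift T b d)"
  shows "anc T a b"
proof -
  define b' where "b' = shift T b (snd a - snd b)"
  have b': "anc T b' b" "snd b' = snd a" "b' \<in> pts T"
    using assms(4) shift_anc[OF assms(1,3)] snd_shift[OF assms(1,3)] shift_in_pts[OF assms(1,3)]
    unfolding b'_def by auto
  have "a = b'"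
  proof (rule pts_eqI_close_common_anc[OF assms(1,2) b'(3)])
    fix \<delta> :: real assume "\<delta> > 0"
    then obtain d where d: "0 \<le> d" "d < \<delta>" "anc T (shift T a d) (shift T b d)" using close by blast
    have "shift T b' d = shift T a d"
      using anc_eq_by_height[OF assms(1) anc_trans[OF shift_anc[OF assms(1) b'(3) d(1)] b'(1)]
          anc_trans[OF d(3) shift_anc[OF assms(1,3) d(1)]]]
        b'(2) snd_shift[OF assms(1) b'(3) d(1)] snd_shift[OF assms(1,2) d(1)]
      by simp
    then show "\<exists>z. anc T z a \<and> anc T z b' \<and> snd z < snd a + \<delta>"
      using shift_anc[OF assms(1,2) d(1)] shift_anc[OF assms(1) b'(3) d(1)]
        snd_shift[OF assms(1,2) d(1)] d(2) by (metis add_strict_left_mono)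
  qed (use b' in simp)
  then show ?thesis using b'(1) by simp
qed

subsection \<open>The path metric and continuity\<close>

lemma common_anc_exists:
  assumes "merge_tree T" "x \<in> pts T" "y \<in> pts T"
  shows "\<exists>z. anc T z x \<and> anc T z y"
proof -
  define t where "t = max (max (snd x) (snd y)) (hgt T (root T))"
  have "(root T, t) \<in> pts T" using merge_tree_root_in[OF assms(1)] unfolding t_def by (simp add: pts_iff)
  then have "anc T (root T, t) x" "anc T (root T, t) y"
    using assms vanc_root[OF assms(1) ptsD(1)] unfolding anc_def t_def by auto
  then show ?thesis by blast
qed

lemma lca_height_le:
  assumes "anc T z x" "anc T z y"
  shows "lca_height T x y \<le> snd z"
  unfolding lca_height_def
proof (rule cInf_lower)
  show "snd z \<in> {snd z | z. anc T z x \<and> anc T z y}" using assms by blast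
  show "bdd_below {snd z | z. anc T z x \<and> anc T z y}"
    by (rule bdd_belowI[of _ "snd x"]) (auto dest: anc_snd_le)
qed

lemma
  assumes "merge_tree T" "x \<in> pts T" "y \<in> pts T"
  shows lca_height_ge: "snd x \<le> lca_height T x y" "snd y \<le> lca_height T x y"
    and lca_height_less_iff: "lca_height T x y < t \<longleftrightarrow> (\<exists>z. anc T z x \<and> anc T z y \<and> snd z < t)"
proof -
  define H where "H = {snd z | z. anc T z x \<and> anc T z y}"
  have ne: "H \<noteq> {}" using common_anc_exists[OF assms] unfolding H_def by blast
  have bdd: "bdd_below H" unfolding H_def by (rule bdd_belowI[of _ "snd x"]) (auto dest: anc_snd_le)
  have "snd x \<le> h \<and> snd y \<le> h" if "h \<in> H" for h
    using that anc_snd_le unfolding H_def by blast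
  then show "snd x \<le> lca_height T x y" "snd y \<le> lca_height T x y"
    unfolding lca_height_def H_def[symmetric] using cInf_greatest[OF ne] by auto
  show "lca_height T x y < t \<longleftrightarrow> (\<exists>z. anc T z x \<and> anc T z y \<and> snd z < t)"
    unfolding lca_height_def H_def[symmetric] cInf_less_iff[OF ne bdd] unfolding H_def by blast
qed

lemma tdist_commute: "tdist T x y = tdist T y x"
  unfolding tdist_def lca_height_def by (simp add: conj_commute)

lemma tdist_anc:
  assumes "merge_tree T" "anc T x y"
  shows "tdist T x y = snd x - snd y"
proof -
  have "lca_height T x y = snd x"
    using lca_height_le[OF anc_refl[OF anc_in_pts(1)] assms(2)] lca_height_ge(1)[OF assms(1) anc_in_pts]
      assms(2) by (meson order_antisym)
  then show ?thesis unfolding tdist_def by simp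
qed

lemma tdist_shift_shift:
  assumes "merge_tree T" "y \<in> pts T" "0 \<le> s" "0 \<le> t"
  shows "tdist T (shift T y s) (shift T y t) = \<bar>s - t\<bar>"
proof -
  have le: "tdist T (shift T y b) (shift T y a) = b - a" if "0 \<le> a" "a \<le> b" for a b
    using tdist_anc[OF assms(1) shift_anc_shift[OF assms(1,2) that]] that
      snd_shift[OF assms(1,2)] by simp
  show ?thesis
  proof (cases "s \<le> t")
    case True
    then show ?thesis using le[of s t] assms(3) tdist_commute[of T "shift T y s"] by simp
  next
    case False
    then show ?thesis using le[of t s] assms(4) by simp
  qed
qed

text \<open>A short path from F leaves the edge of F only through F itself.\<close>
lemma near_pts_comparable:
  assumes "merge_tree T" "F \<in> pts T"
  obtains \<eta> where "\<eta> > 0"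
    "\<And>q. q \<in> pts T \<Longrightarrow> tdist T q F < \<eta> \<Longrightarrow> snd q \<le> snd F \<Longrightarrow> anc T F q"
    "\<And>q. q \<in> pts T \<Longrightarrow> tdist T q F < \<eta> \<Longrightarrow> snd F \<le> snd q \<Longrightarrow> anc T q F"
proof
  define \<eta> where "\<eta> = (if fst F = root T then 1 else hgt T (par T (fst F)) - snd F)"
  show "\<eta> > 0" using ptsD(3)[OF assms(2)] unfolding \<eta>_def by auto
  have edge: "\<exists>z. anc T z q \<and> anc T z F \<and> fst z = fst F" if q: "q \<in> pts T" "tdist T q F < \<eta>" for q
  proof -
    have "lca_height T q F < snd F + \<eta>"
      using q(2) lca_height_ge[OF assms(1) q(1) assms(2)] unfolding tdist_def by simp
    then obtain z where z: "anc T z q" "anc T z F" "snd z < snd F + \<eta>"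
      using lca_height_less_iff[OF assms(1) q(1) assms(2)] by blast
    moreover have "fst z = fst F"
      using anc_same_edge_below_par[OF assms(1) z(2)] z(3) unfolding \<eta>_def by (auto split: if_splits)
    ultimately show ?thesis by blast
  qed
  show "anc T F q" if "q \<in> pts T" "tdist T q F < \<eta>" "snd q \<le> snd F" for q
    using edge[OF that(1,2)] that(1,3) assms(2) unfolding anc_def by auto
  show "anc T q F" if q: "q \<in> pts T" "tdist T q F < \<eta>" "snd F \<le> snd q" for q
  proof -
    obtain z where z: "anc T z q" "anc T z F" "fst z = fst F" using edge[OF q(1,2)] by blast
    then have "fst q = fst F"
      using anc_same_edge_above_hgt[OF assms(1) z(1)] ptsD(2)[OF assms(2)] q(3) by simp
    then show ?thesis using q(1,3) assms(2) unfolding anc_def by (simp add: vanc_refl)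
  qed
qed

definition height_shift :: "'a mtree \<Rightarrow> 'b mtree \<Rightarrow> real \<Rightarrow> ('a \<times> real \<Rightarrow> 'b \<times> real) \<Rightarrow> bool" where
  "height_shift T1 T2 c f \<longleftrightarrow> (\<forall>x\<in>pts T1. f x \<in> pts T2 \<and> snd (f x) = snd x + c)"

definition anc_mono :: "'a mtree \<Rightarrow> 'b mtree \<Rightarrow> ('a \<times> real \<Rightarrow> 'b \<times> real) \<Rightarrow> bool" where
  "anc_mono T1 T2 f \<longleftrightarrow> (\<forall>x y. anc T1 x y \<longrightarrow> anc T2 (f x) (f y))"

lemma height_shiftD:
  "height_shift T1 T2 c f \<Longrightarrow> x \<in> pts T1 \<Longrightarrow> f x \<in> pts T2"
  "height_shift T1 T2 c f \<Longrightarrow> x \<in> pts T1 \<Longrightarrow> snd (f x) = snd x + c"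
  unfolding height_shift_def by auto

lemma anc_monoD: "anc_mono T1 T2 f \<Longrightarrow> anc T1 x y \<Longrightarrow> anc T2 (f x) (f y)"
  unfolding anc_mono_def by blast

lemma anc_mono_tdist_le:
  assumes m1: "merge_tree T1" and m2: "merge_tree T2"
    and f: "height_shift T1 T2 c f" "anc_mono T1 T2 f" and x: "x \<in> pts T1" and y: "y \<in> pts T1"
  shows "tdist T2 (f x) (f y) \<le> tdist T1 x y"
proof -
  have "lca_height T2 (f x) (f y) \<le> lca_height T1 x y + c"
  proof (rule ccontr)
    assume "\<not> ?thesis"
    then have "lca_height T1 x y < lca_height T2 (f x) (f y) - c" by simp
    then obtain z where z: "anc T1 z x" "anc T1 z y" "snd z < lca_height T2 (f x) (f y) - c"
      using lca_height_less_iff[OF m1 x y] by blast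
    then have "lca_height T2 (f x) (f y) \<le> snd (f z)"
      using lca_height_le anc_monoD[OF f(2)] by blast
    then show False using z(3) height_shiftD(2)[OF f(1) anc_in_pts(1)[OF z(1)]] by simp
  qed
  then show ?thesis
    unfolding tdist_def using height_shiftD(2)[OF f(1)] x y by simp
qed

lemma anc_mono_imp_cont_map:
  assumes "merge_tree T1" "merge_tree T2" "height_shift T1 T2 c f" "anc_mono T1 T2 f"
  shows "cont_map T1 T2 f"
  unfolding cont_map_def
proof (intro conjI ballI allI impI)
  show "f x \<in> pts T2" if "x \<in> pts T1" for x using height_shiftD(1)[OF assms(3) that] .
  show "\<exists>d>0. \<forall>y\<in>pts T1. tdist T1 y x < d \<longrightarrow> tdist T2 (f y) (f x) < e"
    if "x \<in> pts T1" "e > 0" for x e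
    using that anc_mono_tdist_le[OF assms _ that(1)] by (intro exI[of _ e]) force
qed

lemma anc_of_locally_anc_path:
  fixes g :: "real \<Rightarrow> 'v \<times> real"
  assumes "a \<le> b" "g a \<in> pts T"
    and local: "\<And>m. a \<le> m \<Longrightarrow> m \<le> b \<Longrightarrow> \<exists>\<delta>>0. \<forall>t. a \<le> t \<longrightarrow> t \<le> b \<longrightarrow> \<bar>t - m\<bar> < \<delta> \<longrightarrow>
        (t \<le> m \<longrightarrow> anc T (g m) (g t)) \<and> (m \<le> t \<longrightarrow> anc T (g t) (g m))"
  shows "anc T (g b) (g a)"
proof -
  define S where "S = {t. a \<le> t \<and> t \<le> b \<and> anc T (g t) (g a)}"
  define m where "m = Sup S"
  have aS: "a \<in> S" using assms(1,2) anc_refl unfolding S_def by simp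
  have bdd: "bdd_above S" unfolding S_def by (rule bdd_aboveI[of _ b]) simp
  have m: "a \<le> m" "m \<le> b"
    unfolding m_def by (rule cSup_upper[OF aS bdd], rule cSup_least) (use aS in \<open>auto simp: S_def\<close>)
  obtain \<delta> where \<delta>: "\<delta> > 0" "\<And>t. a \<le> t \<Longrightarrow> t \<le> b \<Longrightarrow> \<bar>t - m\<bar> < \<delta> \<Longrightarrow>
      (t \<le> m \<longrightarrow> anc T (g m) (g t)) \<and> (m \<le> t \<longrightarrow> anc T (g t) (g m))"
    using local[OF m] by blast
  have mS: "m \<in> S"
  proof -
    obtain t where t: "t \<in> S" "m - \<delta> < t"
      using less_cSup_iff[OF _ bdd, of "m - \<delta>"] aS \<delta>(1) unfolding m_def by auto
    have "t \<le> m" using cSup_upper[OF t(1) bdd] unfolding m_def .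
    then have "anc T (g m) (g t)" using \<delta>(2)[of t] t m unfolding S_def by auto
    then show ?thesis using t(1) m anc_trans unfolding S_def by blast
  qed
  have "m = b"
  proof (rule ccontr)
    assume "m \<noteq> b"
    define t where "t = min b (m + \<delta> / 2)"
    have t: "m < t" "t \<le> b" "\<bar>t - m\<bar> < \<delta>" using m \<open>m \<noteq> b\<close> \<delta>(1) unfolding t_def by auto
    then have "anc T (g t) (g m)" using \<delta>(2)[of t] m by auto
    then have "anc T (g t) (g a)" using mS anc_trans unfolding S_def by blast
    then have "t \<in> S" using t m unfolding S_def by simp
    then show False using cSup_upper[OF _ bdd] t(1) unfolding m_def by (simp add: not_le[symmetric])
  qed
  then show ?thesis using mS unfolding S_def by simp
qed

text \<open>The image of the segment from y up to x is locally, hence globally, monotone.\<close>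
lemma cont_map_imp_anc_mono:
  assumes m1: "merge_tree T1" and m2: "merge_tree T2"
    and f: "height_shift T1 T2 c f" and cont: "cont_map T1 T2 f"
  shows "anc_mono T1 T2 f"
  unfolding anc_mono_def
proof (intro allI impI)
  fix x y assume xy: "anc T1 x y"
  have y: "y \<in> pts T1" using anc_in_pts(2)[OF xy] .
  define p where "p t = shift T1 y (t - snd y)" for t
  have p: "p t \<in> pts T1" "snd (p t) = t" if "snd y \<le> t" for t
    using that shift_in_pts[OF m1 y] snd_shift[OF m1 y] unfolding p_def by auto
  have fp: "f (p t) \<in> pts T2" "snd (f (p t)) = t + c" if "snd y \<le> t" for t
    using height_shiftD[OF f p(1)[OF that]] p(2)[OF that] by auto
  have "anc T2 (f (p (snd x))) (f (p (snd y)))"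
  proof (rule anc_of_locally_anc_path[where g = "\<lambda>t. f (p t)", OF anc_snd_le[OF xy] fp(1)[OF order_refl]])
    fix m assume m: "snd y \<le> m" "m \<le> snd x"
    obtain \<eta> where \<eta>: "\<eta> > 0"
      "\<And>q. q \<in> pts T2 \<Longrightarrow> tdist T2 q (f (p m)) < \<eta> \<Longrightarrow> snd q \<le> snd (f (p m)) \<Longrightarrow> anc T2 (f (p m)) q"
      "\<And>q. q \<in> pts T2 \<Longrightarrow> tdist T2 q (f (p m)) < \<eta> \<Longrightarrow> snd (f (p m)) \<le> snd q \<Longrightarrow> anc T2 q (f (p m))"
      using near_pts_comparable[OF m2 fp(1)[OF m(1)]] by blast
    have "\<forall>x\<in>pts T1. \<forall>e>0. \<exists>d>0. \<forall>y\<in>pts T1. tdist T1 y x < d \<longrightarrow> tdist T2 (f y) (f x) < e"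
      using cont unfolding cont_map_def by blast
    then obtain \<delta> where \<delta>: "\<delta> > 0"
      "\<And>q. q \<in> pts T1 \<Longrightarrow> tdist T1 q (p m) < \<delta> \<Longrightarrow> tdist T2 (f q) (f (p m)) < \<eta>"
      using p(1)[OF m(1)] \<eta>(1) by blast
    have "tdist T2 (f (p t)) (f (p m)) < \<eta>" if "snd y \<le> t" "\<bar>t - m\<bar> < \<delta>" for t
      using \<delta>(2)[OF p(1)[OF that(1)]] tdist_shift_shift[OF m1 y] that m(1) unfolding p_def by simp
    then show "\<exists>\<delta>>0. \<forall>t. snd y \<le> t \<longrightarrow> t \<le> snd x \<longrightarrow> \<bar>t - m\<bar> < \<delta> \<longrightarrow>
        (t \<le> m \<longrightarrow> anc T2 (f (p m)) (f (p t))) \<and> (m \<le> t \<longrightarrow> anc T2 (f (p t)) (f (p m)))"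
      using \<delta>(1) \<eta>(2,3) fp m(1) by (intro exI[of _ \<delta>]) auto
  qed
  moreover have "p (snd x) = x" unfolding p_def using shift_eqI[OF m1 xy] by simp
  moreover have "p (snd y) = y" unfolding p_def using shift_0[OF m1 y] by simp
  ultimately show "anc T2 (f x) (f y)" by simp
qed

lemma cont_map_iff_anc_mono:
  "merge_tree T1 \<Longrightarrow> merge_tree T2 \<Longrightarrow> height_shift T1 T2 c f \<Longrightarrow> cont_map T1 T2 f \<longleftrightarrow> anc_mono T1 T2 f"
  using anc_mono_imp_cont_map cont_map_imp_anc_mono by blast

lemma anc_mono_shift_commute:
  assumes "merge_tree T1" "merge_tree T2" "height_shift T1 T2 c f" "anc_mono T1 T2 f"
    and "x \<in> pts T1" "0 \<le> d"
  shows "f (shift T1 x d) = shift T2 (f x) d"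
proof (rule shift_eqI[symmetric, OF assms(2)])
  show "anc T2 (f (shift T1 x d)) (f x)" using anc_monoD[OF assms(4) shift_anc[OF assms(1,5,6)]] .
  show "snd (f (shift T1 x d)) = snd (f x) + d"
    using height_shiftD(2)[OF assms(3)] shift_in_pts[OF assms(1,5,6)] snd_shift[OF assms(1,5,6)] assms(5)
    by simp
qed

subsection \<open>Compatible pairs and good maps\<close>

lemma compatible_iff:
  assumes "merge_tree T1" "merge_tree T2"
  shows "compatible T1 T2 e \<alpha> \<beta> \<longleftrightarrow>
    height_shift T1 T2 e \<alpha> \<and> height_shift T2 T1 e \<beta> \<and> anc_mono T1 T2 \<alpha> \<and> anc_mono T2 T1 \<beta> \<and>
    (\<forall>u \<in> pts T1. \<beta> (\<alpha> u) = shift T1 u (2 * e)) \<and> (\<forall>w \<in> pts T2. \<alpha> (\<beta> w) = shift T2 w (2 * e))"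
proof -
  have "cont_map T1 T2 f \<and> (\<forall>u\<in>pts T1. snd (f u) = snd u + e) \<longleftrightarrow>
      height_shift T1 T2 e f \<and> anc_mono T1 T2 f"
    if "merge_tree T1" "merge_tree T2" for T1 :: "'x mtree" and T2 :: "'y mtree" and f
    using cont_map_iff_anc_mono[OF that] unfolding height_shift_def cont_map_def by blast
  from this[OF assms] this[OF assms(2,1)] show ?thesis unfolding compatible_def by blast
qed

lemma compatible_commute: "compatible T1 T2 e \<alpha> \<beta> \<longleftrightarrow> compatible T2 T1 e \<beta> \<alpha>"
  unfolding compatible_def by blast

lemma compatible_shifted:
  assumes m1: "merge_tree T1" and m2: "merge_tree T2" and c: "compatible T1 T2 e \<alpha> \<beta>"
    and "0 \<le> e" "0 \<le> d" and u: "u \<in> pts T1"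
  shows "shift T1 (\<beta> (shift T2 (\<alpha> u) d)) d = shift T1 u (2 * (e + d))"
proof -
  have \<alpha>: "height_shift T1 T2 e \<alpha>" and \<beta>: "height_shift T2 T1 e \<beta>" "anc_mono T2 T1 \<beta>"
    and \<beta>\<alpha>: "\<beta> (\<alpha> u) = shift T1 u (2 * e)"
    using c u unfolding compatible_iff[OF m1 m2] by blast+
  have "\<beta> (shift T2 (\<alpha> u) d) = shift T1 (shift T1 u (2 * e)) d"
    using anc_mono_shift_commute[OF m2 m1 \<beta> height_shiftD(1)[OF \<alpha> u] \<open>0 \<le> d\<close>] \<beta>\<alpha> by simp
  then show ?thesis
    using shift_shift[OF m1 shift_in_pts[OF m1 u] \<open>0 \<le> d\<close> \<open>0 \<le> d\<close>, of "2 * e"]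
      shift_shift[OF m1 u, of "2 * e" "d + d"] assms(4,5) u
    by (simp add: algebra_simps shift_in_pts)
qed

lemma height_shift_shifted:
  "merge_tree T2 \<Longrightarrow> height_shift T1 T2 c f \<Longrightarrow> 0 \<le> d \<Longrightarrow>
    height_shift T1 T2 (c + d) (\<lambda>u. shift T2 (f u) d)"
  unfolding height_shift_def by (simp add: shift_in_pts snd_shift)

lemma anc_mono_shifted:
  "merge_tree T2 \<Longrightarrow> anc_mono T1 T2 f \<Longrightarrow> 0 \<le> d \<Longrightarrow> anc_mono T1 T2 (\<lambda>u. shift T2 (f u) d)"
  unfolding anc_mono_def by (simp add: anc_shift_mono)

lemma compatible_mono:
  assumes m1: "merge_tree T1" and m2: "merge_tree T2" and c: "compatible T1 T2 e \<alpha> \<beta>"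
    and "0 \<le> e" "e \<le> e'"
  shows "compatible T1 T2 e' (\<lambda>u. shift T2 (\<alpha> u) (e' - e)) (\<lambda>w. shift T1 (\<beta> w) (e' - e))"
proof -
  have d: "0 \<le> e' - e" using assms(5) by simp
  have \<alpha>: "height_shift T1 T2 e \<alpha>" "anc_mono T1 T2 \<alpha>" and \<beta>: "height_shift T2 T1 e \<beta>" "anc_mono T2 T1 \<beta>"
    using c unfolding compatible_iff[OF m1 m2] by blast+
  show ?thesis
    unfolding compatible_iff[OF m1 m2]
  proof (intro conjI ballI)
    show "height_shift T1 T2 e' (\<lambda>u. shift T2 (\<alpha> u) (e' - e))"
      using height_shift_shifted[OF m2 \<alpha>(1) d] by simp
    show "height_shift T2 T1 e' (\<lambda>w. shift T1 (\<beta> w) (e' - e))"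
      using height_shift_shifted[OF m1 \<beta>(1) d] by simp
    show "anc_mono T1 T2 (\<lambda>u. shift T2 (\<alpha> u) (e' - e))" using anc_mono_shifted[OF m2 \<alpha>(2) d] .
    show "anc_mono T2 T1 (\<lambda>w. shift T1 (\<beta> w) (e' - e))" using anc_mono_shifted[OF m1 \<beta>(2) d] .
    show "shift T1 (\<beta> (shift T2 (\<alpha> u) (e' - e))) (e' - e) = shift T1 u (2 * e')" if "u \<in> pts T1" for u
      using compatible_shifted[OF m1 m2 c assms(4) d that] by simp
    show "shift T2 (\<alpha> (shift T1 (\<beta> w) (e' - e))) (e' - e) = shift T2 w (2 * e')" if "w \<in> pts T2" for w
      using compatible_shifted[OF m2 m1 compatible_commute[THEN iffD1, OF c] assms(4) d that] by simp
  qed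
qed

lemma anc_mono_image_up_closed:
  assumes "merge_tree T1" "merge_tree T2" "height_shift T1 T2 c \<alpha>" "anc_mono T1 T2 \<alpha>"
    and "y \<in> \<alpha> ` pts T1" "anc T2 z y"
  shows "z \<in> \<alpha> ` pts T1"
proof -
  obtain u where u: "u \<in> pts T1" "y = \<alpha> u" using assms(5) by blast
  have d: "0 \<le> snd z - snd y" using anc_snd_le[OF assms(6)] by simp
  have "z = shift T2 (\<alpha> u) (snd z - snd y)"
    using shift_eqI[OF assms(2,6), of "snd z - snd y"] u(2) by simp
  also have "\<dots> = \<alpha> (shift T1 u (snd z - snd y))"
    using anc_mono_shift_commute[OF assms(1-4) u(1) d] by simp
  finally show ?thesis using shift_in_pts[OF assms(1) u(1) d] by blast
qed

lemma finite_UN_Inf_approx: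
  fixes A :: "'i \<Rightarrow> real set"
  assumes "finite V" "(\<Union>v\<in>V. A v) \<noteq> {}" "bdd_below (\<Union>v\<in>V. A v)"
  obtains v where "v \<in> V" "\<And>\<delta>. \<delta> > 0 \<Longrightarrow> \<exists>t\<in>A v. t < Inf (\<Union>v\<in>V. A v) + \<delta>"
proof -
  have "Inf (\<Union>v\<in>V. A v) \<in> closure (\<Union>v\<in>V. A v)" using assms(2,3) by (rule closure_contains_Inf)
  moreover have "closure (\<Union>v\<in>V. A v) \<subseteq> (\<Union>v\<in>V. closure (A v))"
    using closure_subset assms(1) by (intro closure_minimal closed_UN) auto
  ultimately obtain v where v: "v \<in> V" "Inf (\<Union>v\<in>V. A v) \<in> closure (A v)" by blast
  have "\<exists>t\<in>A v. t < Inf (\<Union>v\<in>V. A v) + \<delta>" if \<delta>: "\<delta> > 0" for \<delta>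
  proof -
    obtain t where t: "t \<in> A v" "dist t (Inf (\<Union>v\<in>V. A v)) < \<delta>"
      using v(2) \<delta> unfolding closure_approachable by blast
    then have "t < Inf (\<Union>v\<in>V. A v) + \<delta>" by (simp add: dist_real_def abs_less_iff)
    with t(1) show ?thesis by blast
  qed
  with v(1) show ?thesis by (rule that)
qed

lemma anc_mono_edge_limit:
  assumes m1: "merge_tree T1" and m2: "merge_tree T2"
    and \<alpha>: "height_shift T1 T2 c \<alpha>" "anc_mono T1 T2 \<alpha>" and w: "w \<in> pts T2" "snd w \<le> s"
    and approx: "\<And>\<delta>. \<delta> > 0 \<Longrightarrow> \<exists>t. s \<le> t \<and> t < s + \<delta> \<and> (v, t - c) \<in> pts T1 \<and> anc T2 (\<alpha> (v, t - c)) w"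
  shows "(v, s - c) \<in> pts T1" "\<alpha> (v, s - c) = shift T2 w (s - snd w)"
proof -
  obtain t1 where "s \<le> t1" "(v, t1 - c) \<in> pts T1" using approx[of 1] by auto
  moreover have "hgt T1 v \<le> s - c"
  proof (rule field_le_epsilon)
    fix \<delta> :: real assume "\<delta> > 0"
    then obtain t where "t < s + \<delta>" "(v, t - c) \<in> pts T1" using approx by blast
    then show "hgt T1 v \<le> s - c + \<delta>" by (auto simp: pts_iff)
  qed
  ultimately show us: "(v, s - c) \<in> pts T1" by (auto simp: pts_iff)
  define p where "p = shift T2 w (s - snd w)"
  have p: "anc T2 p w" "snd p = s" "p \<in> pts T2"
    using w shift_anc[OF m2 w(1)] snd_shift[OF m2 w(1)] shift_in_pts[OF m2 w(1)] unfolding p_def by auto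
  have "\<alpha> (v, s - c) = p"
  proof (rule pts_eqI_close_common_anc[OF m2 height_shiftD(1)[OF \<alpha>(1) us] p(3)])
    show "snd (\<alpha> (v, s - c)) = snd p" using p(2) height_shiftD(2)[OF \<alpha>(1) us] by simp
    fix \<delta> :: real assume "\<delta> > 0"
    then obtain t where t: "s \<le> t" "t < s + \<delta>" "(v, t - c) \<in> pts T1" "anc T2 (\<alpha> (v, t - c)) w"
      using approx by blast
    have "anc T1 (v, t - c) (v, s - c)" using t(1,3) us unfolding anc_def by (simp add: vanc_refl)
    then have "anc T2 (\<alpha> (v, t - c)) (\<alpha> (v, s - c))" by (rule anc_monoD[OF \<alpha>(2)])
    moreover have "anc T2 (\<alpha> (v, t - c)) p"
      using anc_by_height[OF m2 p(1) t(4)] p(2) t(1) height_shiftD(2)[OF \<alpha>(1) t(3)] by simp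
    moreover have "snd (\<alpha> (v, t - c)) < snd (\<alpha> (v, s - c)) + \<delta>"
      using height_shiftD(2)[OF \<alpha>(1) t(3)] height_shiftD(2)[OF \<alpha>(1) us] t(2) by simp
    ultimately show "\<exists>z. anc T2 z (\<alpha> (v, s - c)) \<and> anc T2 z p \<and> snd z < snd (\<alpha> (v, s - c)) + \<delta>"
      by blast
  qed
  then show "\<alpha> (v, s - c) = shift T2 w (s - snd w)" unfolding p_def .
qed

text \<open>The heights of the ancestors of w in the image accumulate at their infimum along
  one edge of T1, as there are finitely many edges.\<close>
lemma lowest_anc_in_image_exists:
  assumes m1: "merge_tree T1" and m2: "merge_tree T2"
    and \<alpha>: "height_shift T1 T2 c \<alpha>" "anc_mono T1 T2 \<alpha>"
    and w: "w \<in> pts T2" and z0: "z0 \<in> \<alpha> ` pts T1" "anc T2 z0 w"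
  shows "\<exists>p. lowest_anc_in T2 (\<alpha> ` pts T1) w p"
proof -
  define A where "A v = {t. (v, t - c) \<in> pts T1 \<and> anc T2 (\<alpha> (v, t - c)) w}" for v
  define s where "s = Inf (\<Union>v\<in>verts T1. A v)"
  have in_A: "snd z \<in> (\<Union>v\<in>verts T1. A v)" if z: "z \<in> \<alpha> ` pts T1" "anc T2 z w" for z
  proof -
    obtain u where u: "u \<in> pts T1" "z = \<alpha> u" using z(1) by blast
    then have "u = (fst u, snd z - c)" using height_shiftD(2)[OF \<alpha>(1) u(1)] by (simp add: prod_eq_iff)
    then have "snd z \<in> A (fst u)" using u z(2) unfolding A_def by (metis (mono_tags, lifting) mem_Collect_eq)
    then show ?thesis using ptsD(1)[OF u(1)] by blast
  qed
  have ne: "(\<Union>v\<in>verts T1. A v) \<noteq> {}" using in_A[OF z0] by blast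
  have lb: "snd w \<le> t" if "t \<in> A v" for v t
    using that anc_snd_le height_shiftD(2)[OF \<alpha>(1)] unfolding A_def by fastforce
  then have bdd: "bdd_below (\<Union>v\<in>verts T1. A v)" by (intro bdd_belowI) blast
  have s_le: "s \<le> t" if "t \<in> (\<Union>v\<in>verts T1. A v)" for t
    unfolding s_def using that bdd by (rule cInf_lower)
  have w_s: "snd w \<le> s" unfolding s_def using ne lb by (intro cInf_greatest) blast+
  obtain v where v: "v \<in> verts T1" "\<And>\<delta>. \<delta> > 0 \<Longrightarrow> \<exists>t\<in>A v. t < s + \<delta>"
    using finite_UN_Inf_approx[OF merge_tree_finite[OF m1] ne bdd] unfolding s_def by blast
  have "\<exists>t. s \<le> t \<and> t < s + \<delta> \<and> (v, t - c) \<in> pts T1 \<and> anc T2 (\<alpha> (v, t - c)) w" if "\<delta> > 0" for \<delta>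
    using v s_le that unfolding A_def by blast
  note edge = anc_mono_edge_limit[OF m1 m2 \<alpha> w w_s this]
  define p where "p = shift T2 w (s - snd w)"
  have p: "p \<in> \<alpha> ` pts T1" "anc T2 p w" "snd p = s"
    using edge w_s shift_anc[OF m2 w] snd_shift[OF m2 w] unfolding p_def by (auto intro: rev_image_eqI)
  moreover have "anc T2 z p" if "z \<in> \<alpha> ` pts T1" "anc T2 z w" for z
    using anc_by_height[OF m2 p(2) that(2)] p(3) s_le[OF in_A[OF that]] by simp
  ultimately show ?thesis unfolding lowest_anc_in_def by blast
qed

lemma compatible_imp_good_map:
  assumes m1: "merge_tree T1" and m2: "merge_tree T2" and "0 \<le> \<epsilon>"
    and c: "compatible T1 T2 \<epsilon> \<alpha> \<beta>"
  shows "good_map T1 T2 \<epsilon> \<alpha>"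
proof -
  have \<alpha>: "height_shift T1 T2 \<epsilon> \<alpha>" "anc_mono T1 T2 \<alpha>" and \<beta>: "height_shift T2 T1 \<epsilon> \<beta>" "anc_mono T2 T1 \<beta>"
    and \<beta>\<alpha>: "\<forall>u \<in> pts T1. \<beta> (\<alpha> u) = shift T1 u (2 * \<epsilon>)"
    and \<alpha>\<beta>: "\<forall>w \<in> pts T2. \<alpha> (\<beta> w) = shift T2 w (2 * \<epsilon>)"
    using c unfolding compatible_iff[OF m1 m2] by blast+
  have "anc T1 (shift T1 u1 (2 * \<epsilon>)) (shift T1 u2 (2 * \<epsilon>))"
    if "u1 \<in> pts T1" "u2 \<in> pts T1" "anc T2 (\<alpha> u1) (\<alpha> u2)" for u1 u2
    using anc_monoD[OF \<beta>(2) that(3)] \<beta>\<alpha> that(1,2) by simp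
  moreover have "\<exists>wF. lowest_anc_in T2 (\<alpha> ` pts T1) w wF \<and> \<bar>snd wF - snd w\<bar> \<le> 2 * \<epsilon>"
    if w: "w \<in> pts T2" for w
  proof -
    have 2: "0 \<le> 2 * \<epsilon>" using \<open>0 \<le> \<epsilon>\<close> by simp
    have top: "shift T2 w (2 * \<epsilon>) \<in> \<alpha> ` pts T1"
      using \<alpha>\<beta> w height_shiftD(1)[OF \<beta>(1) w] by (metis image_eqI)
    obtain p where p: "lowest_anc_in T2 (\<alpha> ` pts T1) w p"
      using lowest_anc_in_image_exists[OF m1 m2 \<alpha> w top shift_anc[OF m2 w 2]] by blast
    then have "anc T2 p w" "anc T2 (shift T2 w (2 * \<epsilon>)) p"
      using top shift_anc[OF m2 w 2] unfolding lowest_anc_in_def by blast+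
    then have "\<bar>snd p - snd w\<bar> \<le> 2 * \<epsilon>"
      using anc_snd_le[of T2 p w] anc_snd_le[of T2 _ p] snd_shift[OF m2 w 2] by fastforce
    then show ?thesis using p by blast
  qed
  moreover have "cont_map T1 T2 \<alpha>" using c unfolding compatible_def by blast
  ultimately show ?thesis unfolding good_map_def using height_shiftD(2)[OF \<alpha>(1)] by blast
qed

lemma lowest_anc_in_unique:
  "merge_tree T \<Longrightarrow> lowest_anc_in T S w z \<Longrightarrow> lowest_anc_in T S w z' \<Longrightarrow> z = z'"
  unfolding lowest_anc_in_def by (blast intro: anc_antisym)

lemma lowest_anc_in_self: "w \<in> S \<Longrightarrow> w \<in> pts T \<Longrightarrow> lowest_anc_in T S w w"
  unfolding lowest_anc_in_def by (blast intro: anc_refl)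

lemma lowest_anc_in_desc:
  assumes "merge_tree T" and up: "\<And>y z. y \<in> S \<Longrightarrow> anc T z y \<Longrightarrow> z \<in> S"
    and "anc T w1 w2" "w1 \<notin> S" and low: "lowest_anc_in T S w1 z"
  shows "lowest_anc_in T S w2 z"
  unfolding lowest_anc_in_def
proof (intro conjI ballI impI)
  show "z \<in> S" "anc T z w2" using low anc_trans[OF _ assms(3)] unfolding lowest_anc_in_def by auto
  fix y assume y: "y \<in> S" "anc T y w2"
  have "\<not> anc T w1 y" using up[OF y(1)] assms(4) by blast
  then have "anc T y w1" using anc_by_height[OF assms(1) assms(3) y(2)] anc_by_height[OF assms(1) y(2) assms(3)]
    by (meson le_cases)
  then show "anc T y z" using low y(1) unfolding lowest_anc_in_def by blast
qed

lemma height_shift_inv_into: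
  "height_shift T1 T2 c \<alpha> \<Longrightarrow> z \<in> \<alpha> ` pts T1 \<Longrightarrow> snd (inv_into (pts T1) \<alpha> z) = snd z - c"
  using height_shiftD(2)[of T1 T2 c \<alpha> "inv_into (pts T1) \<alpha> z"] by (simp add: inv_into_into f_inv_into_f)

lemma good_map_height_shift: "good_map T1 T2 \<epsilon> \<alpha> \<Longrightarrow> height_shift T1 T2 \<epsilon> \<alpha>"
  unfolding good_map_def cont_map_def height_shift_def by blast

lemma good_map_anc_mono:
  "merge_tree T1 \<Longrightarrow> merge_tree T2 \<Longrightarrow> good_map T1 T2 \<epsilon> \<alpha> \<Longrightarrow> anc_mono T1 T2 \<alpha>"
  using cont_map_iff_anc_mono good_map_height_shift unfolding good_map_def by blast

lemma good_map_shift_eq: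
  assumes "merge_tree T1" "good_map T1 T2 \<epsilon> \<alpha>" "u1 \<in> pts T1" "u2 \<in> pts T1" "\<alpha> u1 = \<alpha> u2"
  shows "shift T1 u1 (2 * \<epsilon>) = shift T1 u2 (2 * \<epsilon>)"
proof -
  have "anc T2 (\<alpha> u2) (\<alpha> u2)"
    using anc_refl height_shiftD(1)[OF good_map_height_shift[OF assms(2)] assms(4)] .
  then have "anc T2 (\<alpha> u1) (\<alpha> u2)" "anc T2 (\<alpha> u2) (\<alpha> u1)" using assms(5) by simp_all
  then show ?thesis
    using assms(2-4) anc_antisym[OF assms(1)] unfolding good_map_def by blast
qed

lemma good_map_shift_eq_shift:
  assumes m1: "merge_tree T1" and m2: "merge_tree T2" and "0 \<le> \<epsilon>" and g: "good_map T1 T2 \<epsilon> \<alpha>"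
    and "u \<in> pts T1" "u' \<in> pts T1" "0 \<le> d" "\<alpha> u' = shift T2 (\<alpha> u) d"
  shows "shift T1 u' (2 * \<epsilon>) = shift T1 u (d + 2 * \<epsilon>)"
proof -
  have "\<alpha> (shift T1 u d) = \<alpha> u'"
    using anc_mono_shift_commute[OF m1 m2 good_map_height_shift[OF g] good_map_anc_mono[OF m1 m2 g]]
      assms(5,7,8) by simp
  then have "shift T1 u' (2 * \<epsilon>) = shift T1 (shift T1 u d) (2 * \<epsilon>)"
    using good_map_shift_eq[OF m1 g shift_in_pts[OF m1 assms(5,7)] assms(6)] by simp
  then show ?thesis using shift_shift[OF m1 assms(5,7)] \<open>0 \<le> \<epsilon>\<close> by simp
qed

definition lowest_image_anc ::
  "'a mtree \<Rightarrow> 'b mtree \<Rightarrow> ('a \<times> real \<Rightarrow> 'b \<times> real) \<Rightarrow> 'b \<times> real \<Rightarrow> 'b \<times> real" where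
  "lowest_image_anc T1 T2 \<alpha> w = (THE z. lowest_anc_in T2 (\<alpha> ` pts T1) w z)"

lemma
  assumes m2: "merge_tree T2" and "0 \<le> \<epsilon>" and g: "good_map T1 T2 \<epsilon> \<alpha>" and w: "w \<in> pts T2"
  shows lowest_anc_in_lowest_image_anc: "lowest_anc_in T2 (\<alpha> ` pts T1) w (lowest_image_anc T1 T2 \<alpha> w)"
    and snd_lowest_image_anc_le: "snd (lowest_image_anc T1 T2 \<alpha> w) \<le> snd w + 2 * \<epsilon>"
proof -
  have "\<exists>z. lowest_anc_in T2 (\<alpha> ` pts T1) w z \<and> snd z \<le> snd w + 2 * \<epsilon>"
  proof (cases "w \<in> \<alpha> ` pts T1")
    case True
    then show ?thesis using lowest_anc_in_self[OF True w] \<open>0 \<le> \<epsilon>\<close> by (intro exI[of _ w]) simp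
  next
    case False
    then show ?thesis using g w unfolding good_map_def by force
  qed
  then obtain z where z: "lowest_anc_in T2 (\<alpha> ` pts T1) w z" "snd z \<le> snd w + 2 * \<epsilon>" by blast
  moreover have "lowest_image_anc T1 T2 \<alpha> w = z"
    unfolding lowest_image_anc_def using z(1) lowest_anc_in_unique[OF m2] by blast
  ultimately show "lowest_anc_in T2 (\<alpha> ` pts T1) w (lowest_image_anc T1 T2 \<alpha> w)"
    "snd (lowest_image_anc T1 T2 \<alpha> w) \<le> snd w + 2 * \<epsilon>" by auto
qed

lemma lowest_image_anc_image:
  assumes "merge_tree T2" "0 \<le> \<epsilon>" "good_map T1 T2 \<epsilon> \<alpha>" "w \<in> \<alpha> ` pts T1"
  shows "lowest_image_anc T1 T2 \<alpha> w = w"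
proof -
  have w: "w \<in> pts T2" using assms(4) height_shiftD(1)[OF good_map_height_shift[OF assms(3)]] by blast
  show ?thesis
    using lowest_anc_in_unique[OF assms(1) lowest_anc_in_lowest_image_anc[OF assms(1-3) w] lowest_anc_in_self[OF assms(4) w]] .
qed

text \<open>With w^F = lowest_image_anc T1 T2 \<alpha> w as in the paper, w is sent to the point at
  height snd w + \<epsilon> above a preimage of w^F.\<close>
definition good_map_inv ::
  "'a mtree \<Rightarrow> 'b mtree \<Rightarrow> real \<Rightarrow> ('a \<times> real \<Rightarrow> 'b \<times> real) \<Rightarrow> 'b \<times> real \<Rightarrow> 'a \<times> real" where
  "good_map_inv T1 T2 \<epsilon> \<alpha> w =
    (let z = lowest_image_anc T1 T2 \<alpha> w in shift T1 (inv_into (pts T1) \<alpha> z) (snd w + 2 * \<epsilon> - snd z))"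

lemma good_map_inv_anc:
  assumes m1: "merge_tree T1" and m2: "merge_tree T2" and "0 \<le> \<epsilon>" and g: "good_map T1 T2 \<epsilon> \<alpha>"
    and w12: "anc T2 w1 w2"
  defines "z2 \<equiv> lowest_image_anc T1 T2 \<alpha> w2"
  shows "good_map_inv T1 T2 \<epsilon> \<alpha> w1 = shift T1 (inv_into (pts T1) \<alpha> z2) (snd w1 + 2 * \<epsilon> - snd z2)"
proof -
  have w1: "w1 \<in> pts T2" and w2: "w2 \<in> pts T2" using anc_in_pts[OF w12] by auto
  define I where "I = \<alpha> ` pts T1"
  have z2: "lowest_anc_in T2 I w2 z2"
    using lowest_anc_in_lowest_image_anc[OF m2 \<open>0 \<le> \<epsilon>\<close> g w2] unfolding I_def z2_def .
  then have z2I: "z2 \<in> I" "anc T2 z2 w2" unfolding lowest_anc_in_def by auto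
  show ?thesis
  proof (cases "w1 \<in> I")
    case True
    have "anc T2 w1 z2" using z2 True w12 unfolding lowest_anc_in_def by blast
    then have "\<alpha> (inv_into (pts T1) \<alpha> w1) = shift T2 (\<alpha> (inv_into (pts T1) \<alpha> z2)) (snd w1 - snd z2)"
      using True z2I(1) shift_eqI[OF m2 \<open>anc T2 w1 z2\<close>] unfolding I_def by (simp add: f_inv_into_f)
    from good_map_shift_eq_shift[OF m1 m2 \<open>0 \<le> \<epsilon>\<close> g _ _ _ this] True z2I(1) anc_snd_le[OF \<open>anc T2 w1 z2\<close>]
    show ?thesis
      using lowest_image_anc_image[OF m2 \<open>0 \<le> \<epsilon>\<close> g] unfolding good_map_inv_def I_def
      by (simp add: inv_into_into algebra_simps)
  next
    case False
    have "lowest_anc_in T2 I w2 (lowest_image_anc T1 T2 \<alpha> w1)"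
      using lowest_anc_in_desc[OF m2 _ w12 False lowest_anc_in_lowest_image_anc[OF m2 \<open>0 \<le> \<epsilon>\<close> g w1, folded I_def]]
        anc_mono_image_up_closed[OF m1 m2 good_map_height_shift[OF g] good_map_anc_mono[OF m1 m2 g]]
      unfolding I_def by blast
    then have "lowest_image_anc T1 T2 \<alpha> w1 = z2" using lowest_anc_in_unique[OF m2 _ z2] by blast
    then show ?thesis unfolding good_map_inv_def by simp
  qed
qed

lemma good_map_inv_shift:
  assumes m1: "merge_tree T1" and m2: "merge_tree T2" and "0 \<le> \<epsilon>" and g: "good_map T1 T2 \<epsilon> \<alpha>"
    and w: "w \<in> pts T2"
  defines "z \<equiv> lowest_image_anc T1 T2 \<alpha> w"
  shows "good_map_inv T1 T2 \<epsilon> \<alpha> w = shift T1 (inv_into (pts T1) \<alpha> z) (snd w + 2 * \<epsilon> - snd z)"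
    and "inv_into (pts T1) \<alpha> z \<in> pts T1" "\<alpha> (inv_into (pts T1) \<alpha> z) = z"
    and "snd (inv_into (pts T1) \<alpha> z) = snd z - \<epsilon>" "anc T2 z w" "0 \<le> snd w + 2 * \<epsilon> - snd z"
proof -
  have z: "z \<in> \<alpha> ` pts T1" "anc T2 z w"
    using lowest_anc_in_lowest_image_anc[OF m2 \<open>0 \<le> \<epsilon>\<close> g w] unfolding z_def lowest_anc_in_def by auto
  then show "inv_into (pts T1) \<alpha> z \<in> pts T1" "\<alpha> (inv_into (pts T1) \<alpha> z) = z" "anc T2 z w"
    "snd (inv_into (pts T1) \<alpha> z) = snd z - \<epsilon>"
    by (simp_all add: inv_into_into f_inv_into_f height_shift_inv_into[OF good_map_height_shift[OF g]])
  show "0 \<le> snd w + 2 * \<epsilon> - snd z" using snd_lowest_image_anc_le[OF m2 \<open>0 \<le> \<epsilon>\<close> g w] unfolding z_def by simp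
qed (simp add: good_map_inv_def z_def Let_def)

lemma good_map_imp_compatible:
  assumes m1: "merge_tree T1" and m2: "merge_tree T2" and "0 \<le> \<epsilon>" and g: "good_map T1 T2 \<epsilon> \<alpha>"
  shows "compatible T1 T2 \<epsilon> \<alpha> (good_map_inv T1 T2 \<epsilon> \<alpha>)"
proof -
  define \<beta> where "\<beta> = good_map_inv T1 T2 \<epsilon> \<alpha>"
  note inv = good_map_inv_shift[OF m1 m2 \<open>0 \<le> \<epsilon>\<close> g, folded \<beta>_def]
  have \<alpha>: "height_shift T1 T2 \<epsilon> \<alpha>" "anc_mono T1 T2 \<alpha>"
    using good_map_height_shift[OF g] good_map_anc_mono[OF m1 m2 g] .
  have "height_shift T2 T1 \<epsilon> \<beta>"
    unfolding height_shift_def using inv shift_in_pts[OF m1] snd_shift[OF m1] by simp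
  moreover have "anc_mono T2 T1 \<beta>"
    unfolding anc_mono_def
  proof (intro allI impI)
    fix w1 w2 assume w12: "anc T2 w1 w2"
    have w2: "w2 \<in> pts T2" using anc_in_pts(2)[OF w12] .
    show "anc T1 (\<beta> w1) (\<beta> w2)"
      using good_map_inv_anc[OF m1 m2 \<open>0 \<le> \<epsilon>\<close> g w12, folded \<beta>_def] inv(1)[OF w2]
        shift_anc_shift[OF m1 inv(2)[OF w2] inv(6)[OF w2]] anc_snd_le[OF w12] by simp
  qed
  moreover have "\<beta> (\<alpha> u) = shift T1 u (2 * \<epsilon>)" if u: "u \<in> pts T1" for u
  proof -
    have au: "\<alpha> u \<in> \<alpha> ` pts T1" "\<alpha> u \<in> pts T2" using u height_shiftD(1)[OF \<alpha>(1) u] by auto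
    then have "\<beta> (\<alpha> u) = shift T1 (inv_into (pts T1) \<alpha> (\<alpha> u)) (2 * \<epsilon>)"
      using inv(1) lowest_image_anc_image[OF m2 \<open>0 \<le> \<epsilon>\<close> g au(1)] by simp
    then show ?thesis using good_map_shift_eq[OF m1 g inv_into_into[OF au(1)] u] au(1) by (simp add: f_inv_into_f)
  qed
  moreover have "\<alpha> (\<beta> w) = shift T2 w (2 * \<epsilon>)" if w: "w \<in> pts T2" for w
  proof -
    define z where "z = lowest_image_anc T1 T2 \<alpha> w"
    have "\<alpha> (\<beta> w) = shift T2 z (snd w + 2 * \<epsilon> - snd z)"
      using anc_mono_shift_commute[OF m1 m2 \<alpha> inv(2,6)[OF w]] inv(1,3)[OF w] unfolding z_def by simp
    also have "\<dots> = shift T2 w (2 * \<epsilon>)"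
      using shift_shift[OF m2 w, of "snd z - snd w" "snd w + 2 * \<epsilon> - snd z"]
        shift_eqI[OF m2 inv(5)[OF w], of "snd z - snd w"] anc_snd_le[OF inv(5)[OF w]] inv(6)[OF w]
      unfolding z_def by simp
    finally show ?thesis .
  qed
  ultimately show ?thesis using \<alpha> unfolding compatible_iff[OF m1 m2] \<beta>_def by blast
qed

subsection \<open>Existence and limits of compatible pairs\<close>

lemma Min_hgt_le_snd: "merge_tree T \<Longrightarrow> x \<in> pts T \<Longrightarrow> Min (hgt T ` verts T) \<le> snd x"
  using Min_le[OF finite_imageI[OF merge_tree_finite]] ptsD(1,2)[of x T] by (meson image_eqI order_trans)

lemma shift_eq_root_ray:
  assumes "merge_tree T" "x \<in> pts T" "0 \<le> t" "(root T, snd x + t) \<in> pts T"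
  shows "shift T x t = (root T, snd x + t)"
  using assms vanc_root[OF assms(1) ptsD(1)[OF assms(2)]] by (intro shift_eqI) (auto simp: anc_def)

lemma root_ray_map:
  assumes "merge_tree T2" "\<And>x. x \<in> pts T1 \<Longrightarrow> hgt T2 (root T2) \<le> snd x + e"
  shows "height_shift T1 T2 e (\<lambda>x. (root T2, snd x + e))" "anc_mono T1 T2 (\<lambda>x. (root T2, snd x + e))"
  using assms merge_tree_root_in[OF assms(1)]
  unfolding height_shift_def anc_mono_def anc_def by (auto simp: pts_iff vanc_refl)

lemma compatible_exists:
  fixes T1 :: "'a mtree" and T2 :: "'b mtree"
  assumes m1: "merge_tree T1" and m2: "merge_tree T2"
  shows "\<exists>e \<alpha> \<beta>. 0 \<le> e \<and> compatible T1 T2 e \<alpha> \<beta>"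
proof -
  define b1 where "b1 = Min (hgt T1 ` verts T1)"
  define b2 where "b2 = Min (hgt T2 ` verts T2)"
  define e where "e = max (hgt T2 (root T2) - b1) (hgt T1 (root T1) - b2)"
  have e_ge: "hgt T2 (root T2) - b1 \<le> e" "hgt T1 (root T1) - b2 \<le> e" unfolding e_def by simp_all
  have r1: "(root T1, hgt T1 (root T1)) \<in> pts T1" using vertex_in_pts[OF m1 merge_tree_root_in[OF m1]] .
  have r2: "(root T2, hgt T2 (root T2)) \<in> pts T2" using vertex_in_pts[OF m2 merge_tree_root_in[OF m2]] .
  have b: "b1 \<le> snd x" "b2 \<le> snd y" if "x \<in> pts T1" "y \<in> pts T2" for x y
    unfolding b1_def b2_def using Min_hgt_le_snd m1 m2 that by blast+
  have e0: "0 \<le> e" using b[OF r1 r2] e_ge by simp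
  have e1: "hgt T2 (root T2) \<le> snd x + e" if "x \<in> pts T1" for x using b[OF that r2] e_ge by simp
  have e2: "hgt T1 (root T1) \<le> snd y + e" if "y \<in> pts T2" for y using b[OF r1 that] e_ge by simp
  define \<alpha> where "\<alpha> x = (root T2, snd x + e)" for x :: "'a \<times> real"
  define \<beta> where "\<beta> y = (root T1, snd y + e)" for y :: "'b \<times> real"
  have \<alpha>: "height_shift T1 T2 e \<alpha>" "anc_mono T1 T2 \<alpha>"
    using root_ray_map[OF m2 e1] unfolding \<alpha>_def by simp_all
  have \<beta>: "height_shift T2 T1 e \<beta>" "anc_mono T2 T1 \<beta>"
    using root_ray_map[OF m1 e2] unfolding \<beta>_def by simp_all
  have "\<beta> (\<alpha> x) = shift T1 x (2 * e)" if "x \<in> pts T1" for x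
    using shift_eq_root_ray[OF m1 that, of "2 * e"] height_shiftD(1)[OF \<beta>(1) height_shiftD(1)[OF \<alpha>(1) that]] e0
    unfolding \<alpha>_def \<beta>_def by (simp add: add.assoc)
  moreover have "\<alpha> (\<beta> y) = shift T2 y (2 * e)" if "y \<in> pts T2" for y
    using shift_eq_root_ray[OF m2 that, of "2 * e"] height_shiftD(1)[OF \<alpha>(1) height_shiftD(1)[OF \<beta>(1) that]] e0
    unfolding \<alpha>_def \<beta>_def by (simp add: add.assoc)
  ultimately have "compatible T1 T2 e \<alpha> \<beta>" using \<alpha> \<beta> unfolding compatible_iff[OF m1 m2] by blast
  then show ?thesis using e0 by blast
qed

lemma limit_vertex_image:
  assumes m1: "merge_tree T1"
    and approx: "\<And>\<delta>. \<delta> > 0 \<Longrightarrow> \<exists>n\<in>N. e n < \<epsilon> + \<delta>" and ge: "\<And>n. n \<in> N \<Longrightarrow> \<epsilon> \<le> e n"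
    and A: "\<And>n. n \<in> N \<Longrightarrow> height_shift T1 T2 (e n) (A n)"
    and labels: "\<And>n. n \<in> N \<Longrightarrow> fst (A n (v, hgt T1 v)) = \<sigma> v"
    and v: "v \<in> verts T1"
  shows "(\<sigma> v, hgt T1 v + \<epsilon>) \<in> pts T2"
    and "\<And>n. n \<in> N \<Longrightarrow> A n (v, hgt T1 v) = (\<sigma> v, hgt T1 v + e n)"
proof -
  show An: "A n (v, hgt T1 v) = (\<sigma> v, hgt T1 v + e n)" if "n \<in> N" for n
    using height_shiftD(2)[OF A[OF that] vertex_in_pts[OF m1 v]] labels[OF that] by (simp add: prod_eq_iff)
  have pts_n: "(\<sigma> v, hgt T1 v + e n) \<in> pts T2" if "n \<in> N" for n
    using height_shiftD(1)[OF A[OF that] vertex_in_pts[OF m1 v]] An[OF that] by simp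
  obtain n0 where n0: "n0 \<in> N" using approx[of 1] by auto
  have "hgt T2 (\<sigma> v) \<le> hgt T1 v + \<epsilon>"
  proof (rule field_le_epsilon)
    fix \<delta> :: real assume "\<delta> > 0"
    then obtain n where "n \<in> N" "e n < \<epsilon> + \<delta>" using approx by blast
    then show "hgt T2 (\<sigma> v) \<le> hgt T1 v + \<epsilon> + \<delta>" using pts_n[of n] by (simp add: pts_iff)
  qed
  then show "(\<sigma> v, hgt T1 v + \<epsilon>) \<in> pts T2"
    using pts_n[OF n0] ge[OF n0] by (auto simp: pts_iff)
qed

lemma anc_mono_if_shifts_anc_mono:
  assumes m2: "merge_tree T2" and \<alpha>: "height_shift T1 T2 \<epsilon> \<alpha>"
    and approx: "\<And>\<delta>. \<delta> > 0 \<Longrightarrow> \<exists>n\<in>N. e n < \<epsilon> + \<delta>" and ge: "\<And>n. n \<in> N \<Longrightarrow> \<epsilon> \<le> e n"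
    and A: "\<And>n. n \<in> N \<Longrightarrow> anc_mono T1 T2 (A n)"
    and rel: "\<And>n u. n \<in> N \<Longrightarrow> u \<in> pts T1 \<Longrightarrow> A n u = shift T2 (\<alpha> u) (e n - \<epsilon>)"
  shows "anc_mono T1 T2 \<alpha>"
  unfolding anc_mono_def
proof (intro allI impI)
  fix x y assume xy: "anc T1 x y"
  have x: "x \<in> pts T1" and y: "y \<in> pts T1" using anc_in_pts[OF xy] by auto
  show "anc T2 (\<alpha> x) (\<alpha> y)"
  proof (rule anc_if_shifts_anc[OF m2 height_shiftD(1)[OF \<alpha> x] height_shiftD(1)[OF \<alpha> y]])
    show "snd (\<alpha> y) \<le> snd (\<alpha> x)" using height_shiftD(2)[OF \<alpha>] x y anc_snd_le[OF xy] by simp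
    fix \<delta> :: real assume "\<delta> > 0"
    then obtain n where n: "n \<in> N" "e n < \<epsilon> + \<delta>" using approx by blast
    have "anc T2 (shift T2 (\<alpha> x) (e n - \<epsilon>)) (shift T2 (\<alpha> y) (e n - \<epsilon>))"
      using anc_monoD[OF A[OF n(1)] xy] rel[OF n(1) x] rel[OF n(1) y] by simp
    then show "\<exists>d. 0 \<le> d \<and> d < \<delta> \<and> anc T2 (shift T2 (\<alpha> x) d) (shift T2 (\<alpha> y) d)"
      using n ge[OF n(1)] by (intro exI[of _ "e n - \<epsilon>"]) simp
  qed
qed

lemma limit_map_exists:
  assumes m1: "merge_tree T1" and m2: "merge_tree T2"
    and approx: "\<And>\<delta>. \<delta> > 0 \<Longrightarrow> \<exists>n\<in>N. e n < \<epsilon> + \<delta>" and ge: "\<And>n. n \<in> N \<Longrightarrow> \<epsilon> \<le> e n"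
    and A: "\<And>n. n \<in> N \<Longrightarrow> height_shift T1 T2 (e n) (A n)" "\<And>n. n \<in> N \<Longrightarrow> anc_mono T1 T2 (A n)"
    and labels: "\<And>n v. n \<in> N \<Longrightarrow> v \<in> verts T1 \<Longrightarrow> fst (A n (v, hgt T1 v)) = \<sigma> v"
  shows "\<exists>\<alpha>. height_shift T1 T2 \<epsilon> \<alpha> \<and> anc_mono T1 T2 \<alpha> \<and>
    (\<forall>n\<in>N. \<forall>u\<in>pts T1. A n u = shift T2 (\<alpha> u) (e n - \<epsilon>))"
proof -
  define a where "a v = (\<sigma> v, hgt T1 v + \<epsilon>)" for v
  define \<alpha> where "\<alpha> u = shift T2 (a (fst u)) (snd u - hgt T1 (fst u))" for u
  have a: "a v \<in> pts T2" "\<And>n. n \<in> N \<Longrightarrow> A n (v, hgt T1 v) = (\<sigma> v, hgt T1 v + e n)"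
    if "v \<in> verts T1" for v
    using limit_vertex_image[where N = N and e = e and A = A and \<sigma> = \<sigma>,
        OF m1 approx ge A(1) labels[OF _ that] that]
    unfolding a_def by blast+
  have u_shift: "shift T1 (fst u, hgt T1 (fst u)) (snd u - hgt T1 (fst u)) = u"
    "0 \<le> snd u - hgt T1 (fst u)" "fst u \<in> verts T1" if "u \<in> pts T1" for u
    using that ptsD[OF that] vertex_in_pts[OF m1]
    by (auto intro!: shift_eqI[OF m1] simp: anc_def vanc_refl)
  have \<alpha>: "height_shift T1 T2 \<epsilon> \<alpha>"
    unfolding height_shift_def \<alpha>_def
    using u_shift(2,3) a(1) shift_in_pts[OF m2] snd_shift[OF m2] by (simp add: a_def)
  have rel: "A n u = shift T2 (\<alpha> u) (e n - \<epsilon>)" if n: "n \<in> N" and u: "u \<in> pts T1" for n u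
  proof -
    define v k where "v = fst u" and "k = snd u - hgt T1 (fst u)"
    have v: "v \<in> verts T1" "0 \<le> k" "0 \<le> e n - \<epsilon>" using u_shift[OF u] ge[OF n] unfolding v_def k_def by auto
    have "A n u = A n (shift T1 (v, hgt T1 v) k)" using u_shift(1)[OF u] unfolding v_def k_def by simp
    also have "\<dots> = shift T2 (A n (v, hgt T1 v)) k"
      by (rule anc_mono_shift_commute[OF m1 m2 A(1,2)[OF n] vertex_in_pts[OF m1 v(1)] v(2)])
    also have "A n (v, hgt T1 v) = shift T2 (a v) (e n - \<epsilon>)"
      using a(2)[OF v(1) n] a(1)[OF v(1)] ge[OF n] height_shiftD(1)[OF A(1)[OF n] vertex_in_pts[OF m1 v(1)]]
      by (intro shift_eqI[OF m2, symmetric]) (auto simp: a_def anc_def vanc_refl)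
    also have "shift T2 (shift T2 (a v) (e n - \<epsilon>)) k = shift T2 (shift T2 (a v) k) (e n - \<epsilon>)"
      using shift_shift[OF m2 a(1)[OF v(1)]] v by (simp add: add.commute)
    finally show ?thesis unfolding \<alpha>_def v_def k_def .
  qed
  have "anc_mono T1 T2 \<alpha>" using anc_mono_if_shifts_anc_mono[OF m2 \<alpha> approx ge A(2) rel] .
  then show ?thesis using \<alpha> rel by blast
qed

lemma limit_maps_comp:
  assumes m1: "merge_tree T1" and m2: "merge_tree T2" and "0 \<le> \<epsilon>"
    and approx: "\<And>\<delta>. \<delta> > 0 \<Longrightarrow> \<exists>n\<in>N. e n < \<epsilon> + \<delta>" and ge: "\<And>n. n \<in> N \<Longrightarrow> \<epsilon> \<le> e n"
    and \<alpha>: "height_shift T1 T2 \<epsilon> \<alpha>" and \<beta>: "height_shift T2 T1 \<epsilon> \<beta>"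
    and A: "\<And>n u. n \<in> N \<Longrightarrow> u \<in> pts T1 \<Longrightarrow> A n u = shift T2 (\<alpha> u) (e n - \<epsilon>)"
    and B: "\<And>n. n \<in> N \<Longrightarrow> height_shift T2 T1 (e n) (B n)" "\<And>n. n \<in> N \<Longrightarrow> anc_mono T2 T1 (B n)"
      "\<And>n w. n \<in> N \<Longrightarrow> w \<in> pts T2 \<Longrightarrow> B n w = shift T1 (\<beta> w) (e n - \<epsilon>)"
    and BA: "\<And>n u. n \<in> N \<Longrightarrow> u \<in> pts T1 \<Longrightarrow> B n (A n u) = shift T1 u (2 * e n)"
    and u: "u \<in> pts T1"
  shows "\<beta> (\<alpha> u) = shift T1 u (2 * \<epsilon>)"
proof -
  have \<epsilon>: "0 \<le> 2 * \<epsilon>" using \<open>0 \<le> \<epsilon>\<close> by simp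
  have \<alpha>u: "\<alpha> u \<in> pts T2" using height_shiftD(1)[OF \<alpha> u] .
  have \<beta>\<alpha>u: "\<beta> (\<alpha> u) \<in> pts T1" using height_shiftD(1)[OF \<beta> \<alpha>u] .
  show ?thesis
  proof (rule pts_eqI_close_common_anc[OF m1 \<beta>\<alpha>u shift_in_pts[OF m1 u \<epsilon>]])
    show "snd (\<beta> (\<alpha> u)) = snd (shift T1 u (2 * \<epsilon>))"
      using height_shiftD(2)[OF \<beta> \<alpha>u] height_shiftD(2)[OF \<alpha> u] snd_shift[OF m1 u \<epsilon>] by simp
    fix \<delta> :: real assume "\<delta> > 0"
    then obtain n where n: "n \<in> N" "e n < \<epsilon> + \<delta> / 2" using approx[of "\<delta> / 2"] by auto
    define d where "d = e n - \<epsilon>"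
    have d: "0 \<le> d" using ge[OF n(1)] unfolding d_def by simp
    have "B n (A n u) = shift T1 (B n (\<alpha> u)) d"
      using A[OF n(1) u] anc_mono_shift_commute[OF m2 m1 B(1,2)[OF n(1)] \<alpha>u d] unfolding d_def by simp
    also have "\<dots> = shift T1 (\<beta> (\<alpha> u)) (d + d)"
      using B(3)[OF n(1) \<alpha>u] shift_shift[OF m1 \<beta>\<alpha>u d d] unfolding d_def by simp
    finally have via_\<beta>\<alpha>: "B n (A n u) = shift T1 (\<beta> (\<alpha> u)) (d + d)" .
    have via_shift: "B n (A n u) = shift T1 (shift T1 u (2 * \<epsilon>)) (d + d)"
      using BA[OF n(1) u] shift_shift[OF m1 u \<epsilon>, of "d + d"] d unfolding d_def by simp
    have dd: "0 \<le> d + d" using d by simp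
    have "anc T1 (B n (A n u)) (\<beta> (\<alpha> u))" unfolding via_\<beta>\<alpha> by (rule shift_anc[OF m1 \<beta>\<alpha>u dd])
    moreover have "anc T1 (B n (A n u)) (shift T1 u (2 * \<epsilon>))"
      unfolding via_shift by (rule shift_anc[OF m1 shift_in_pts[OF m1 u \<epsilon>] dd])
    moreover have "snd (B n (A n u)) < snd (\<beta> (\<alpha> u)) + \<delta>"
      unfolding via_\<beta>\<alpha> using snd_shift[OF m1 \<beta>\<alpha>u dd] n(2) unfolding d_def by simp
    ultimately show "\<exists>z. anc T1 z (\<beta> (\<alpha> u)) \<and> anc T1 z (shift T1 u (2 * \<epsilon>)) \<and> snd z < snd (\<beta> (\<alpha> u)) + \<delta>"
      by blast
  qed
qed

lemma infinite_subfamily_same_labels: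
  assumes m1: "merge_tree T1" and m2: "merge_tree T2" and "infinite N0"
    and A: "\<And>n. n \<in> N0 \<Longrightarrow> height_shift T1 T2 (e n) (A n)"
  obtains N \<sigma> where "N \<subseteq> N0" "infinite N" "\<And>n v. n \<in> N \<Longrightarrow> v \<in> verts T1 \<Longrightarrow> fst (A n (v, hgt T1 v)) = \<sigma> v"
proof -
  define K where "K n = (\<lambda>v\<in>verts T1. fst (A n (v, hgt T1 v)))" for n
  have "K ` N0 \<subseteq> verts T1 \<rightarrow>\<^sub>E verts T2"
    unfolding K_def using ptsD(1)[OF height_shiftD(1)[OF A vertex_in_pts[OF m1]]] by auto
  then have "finite (K ` N0)"
    by (rule finite_subset) (simp add: finite_PiE merge_tree_finite[OF m1] merge_tree_finite[OF m2])
  from inf_img_fin_dom'[OF this \<open>infinite N0\<close>] obtain \<sigma> where "infinite (K -` {\<sigma>} \<inter> N0)" by blast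
  moreover have "fst (A n (v, hgt T1 v)) = \<sigma> v" if "n \<in> K -` {\<sigma>} \<inter> N0" "v \<in> verts T1" for n v
    using that unfolding K_def by auto
  ultimately show ?thesis using that[of "K -` {\<sigma>} \<inter> N0"] by blast
qed

text \<open>Along a subsequence on which the maps agree on vertex labels, the maps converge.\<close>
lemma compatible_limit:
  assumes m1: "merge_tree T1" and m2: "merge_tree T2" and "0 \<le> \<epsilon>"
    and lim: "e \<longlonglongrightarrow> \<epsilon>" and ge: "\<And>n. \<epsilon> \<le> e n"
    and c: "\<And>n. compatible T1 T2 (e n) (A n) (B n)"
  shows "\<exists>\<alpha> \<beta>. compatible T1 T2 \<epsilon> \<alpha> \<beta>"
proof -
  have AB: "height_shift T1 T2 (e n) (A n)" "anc_mono T1 T2 (A n)"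
    "height_shift T2 T1 (e n) (B n)" "anc_mono T2 T1 (B n)"
    "\<forall>u \<in> pts T1. B n (A n u) = shift T1 u (2 * e n)" "\<forall>w \<in> pts T2. A n (B n w) = shift T2 w (2 * e n)" for n
    using c[of n] unfolding compatible_iff[OF m1 m2] by blast+
  obtain N1 \<sigma> where N1: "infinite N1"
    and labels_A: "\<And>n v. n \<in> N1 \<Longrightarrow> v \<in> verts T1 \<Longrightarrow> fst (A n (v, hgt T1 v)) = \<sigma> v"
    using infinite_subfamily_same_labels[where e = e and A = A, OF m1 m2 infinite_UNIV_nat AB(1)] by metis
  obtain N \<tau> where N: "N \<subseteq> N1" "infinite N"
    and labels_B: "\<And>n w. n \<in> N \<Longrightarrow> w \<in> verts T2 \<Longrightarrow> fst (B n (w, hgt T2 w)) = \<tau> w"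
    by (rule infinite_subfamily_same_labels[where e = e and A = B, OF m2 m1 N1 AB(3)]) blast
  have approx: "\<exists>n\<in>N. e n < \<epsilon> + \<delta>" if \<delta>: "\<delta> > 0" for \<delta>
  proof -
    obtain n0 where "\<forall>n\<ge>n0. norm (e n - \<epsilon>) < \<delta>" using LIMSEQ_D[OF lim \<delta>] by blast
    moreover obtain n where "n \<ge> n0" "n \<in> N" using N(2) unfolding infinite_nat_iff_unbounded_le by blast
    ultimately show ?thesis by force
  qed
  obtain \<alpha> where \<alpha>: "height_shift T1 T2 \<epsilon> \<alpha>" "anc_mono T1 T2 \<alpha>"
    "\<And>n u. n \<in> N \<Longrightarrow> u \<in> pts T1 \<Longrightarrow> A n u = shift T2 (\<alpha> u) (e n - \<epsilon>)"
    using limit_map_exists[OF m1 m2 approx ge AB(1,2) labels_A[OF subsetD[OF N(1)]]] by blast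
  obtain \<beta> where \<beta>: "height_shift T2 T1 \<epsilon> \<beta>" "anc_mono T2 T1 \<beta>"
    "\<And>n w. n \<in> N \<Longrightarrow> w \<in> pts T2 \<Longrightarrow> B n w = shift T1 (\<beta> w) (e n - \<epsilon>)"
    using limit_map_exists[OF m2 m1 approx ge AB(3,4) labels_B] by blast
  have "\<beta> (\<alpha> u) = shift T1 u (2 * \<epsilon>)" if "u \<in> pts T1" for u
    using limit_maps_comp[OF m1 m2 \<open>0 \<le> \<epsilon>\<close> approx ge \<alpha>(1) \<beta>(1) \<alpha>(3) AB(3,4) \<beta>(3)] AB(5) that by blast
  moreover have "\<alpha> (\<beta> w) = shift T2 w (2 * \<epsilon>)" if "w \<in> pts T2" for w
    using limit_maps_comp[OF m2 m1 \<open>0 \<le> \<epsilon>\<close> approx ge \<beta>(1) \<alpha>(1) \<beta>(3) AB(1,2) \<alpha>(3)] AB(6) that by blast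
  ultimately show ?thesis using \<alpha>(1,2) \<beta>(1,2) unfolding compatible_iff[OF m1 m2] by blast
qed

lemma interleaving_dist_attained:
  assumes m1: "merge_tree T1" and m2: "merge_tree T2"
  shows "0 \<le> interleaving_dist T1 T2" "\<exists>\<alpha> \<beta>. compatible T1 T2 (interleaving_dist T1 T2) \<alpha> \<beta>"
proof -
  define S where "S = {e. 0 \<le> e \<and> (\<exists>\<alpha> \<beta>. compatible T1 T2 e \<alpha> \<beta>)}"
  have d: "interleaving_dist T1 T2 = Inf S" unfolding interleaving_dist_def S_def ..
  have ne: "S \<noteq> {}" using compatible_exists[OF m1 m2] unfolding S_def by blast
  have bdd: "bdd_below S" unfolding S_def by (rule bdd_belowI[of _ 0]) simp
  show "0 \<le> interleaving_dist T1 T2" unfolding d using ne by (rule cInf_greatest) (simp add: S_def)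
  obtain x where x: "\<And>n. x n \<in> S" "x \<longlonglongrightarrow> Inf S"
    using closure_contains_Inf[OF ne bdd] unfolding closure_sequential by blast
  have "\<forall>n. \<exists>p. compatible T1 T2 (x n) (fst p) (snd p)" using x(1) unfolding S_def by auto
  then obtain p where p: "\<And>n. compatible T1 T2 (x n) (fst (p n)) (snd (p n))" by metis
  show "\<exists>\<alpha> \<beta>. compatible T1 T2 (interleaving_dist T1 T2) \<alpha> \<beta>"
    unfolding d using compatible_limit[OF m1 m2 _ x(2) cInf_lower[OF x(1) bdd] p]
      \<open>0 \<le> interleaving_dist T1 T2\<close>[unfolded d] by blast
qed

lemma interleaving_dist_le_iff:
  assumes m1: "merge_tree T1" and m2: "merge_tree T2" and "0 \<le> \<epsilon>"
  shows "interleaving_dist T1 T2 \<le> \<epsilon> \<longleftrightarrow> (\<exists>\<alpha> \<beta>. compatible T1 T2 \<epsilon> \<alpha> \<beta>)"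
proof
  assume "interleaving_dist T1 T2 \<le> \<epsilon>"
  then show "\<exists>\<alpha> \<beta>. compatible T1 T2 \<epsilon> \<alpha> \<beta>"
    using interleaving_dist_attained[OF m1 m2] compatible_mono[OF m1 m2] by blast
next
  assume "\<exists>\<alpha> \<beta>. compatible T1 T2 \<epsilon> \<alpha> \<beta>"
  then show "interleaving_dist T1 T2 \<le> \<epsilon>"
    unfolding interleaving_dist_def using \<open>0 \<le> \<epsilon>\<close> by (intro cInf_lower bdd_belowI[of _ 0]) auto
qed

lemma good_map_iff_compatible:
  "merge_tree T1 \<Longrightarrow> merge_tree T2 \<Longrightarrow> 0 \<le> \<epsilon> \<Longrightarrow> good_map T1 T2 \<epsilon> \<alpha> \<longleftrightarrow> (\<exists>\<beta>. compatible T1 T2 \<epsilon> \<alpha> \<beta>)"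
  using good_map_imp_compatible compatible_imp_good_map by blast

theorem theorem1:
  fixes T1 :: "'a mtree" and T2 :: "'b mtree" and \<epsilon> :: real
  assumes "merge_tree T1" and "merge_tree T2" and "0 \<le> \<epsilon>"
  shows "interleaving_dist T1 T2 \<le> \<epsilon> \<longleftrightarrow> (\<exists>\<alpha>. good_map T1 T2 \<epsilon> \<alpha>)"
  using interleaving_dist_le_iff[OF assms] good_map_iff_compatible[OF assms] by blast

end
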